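(* Let $n\ge2$ be an integer and $\lambda>0$, and let $\gamma(t)=(\omega(t),x(t),y(t))$, $t\in(S,T)$ the maximal interval of existence, be a solution with $\omega>0$ of the system $$\frac{d\omega}{dt}=x\omega,\qquad \frac{dx}{dt}=x^2-xy+n-1-\lambda\omega^2,\qquad \frac{dy}{dt}=xy-nx^2-\lambda\omega^2,$$ such that $\int_{t_0}^T\omega(\sigma)\,d\sigma=\infty$ for every $t_0\in(S,T)$. Then $\limsup_{t\to T}x(t)\ge 0$. *)

theory Defs
  imports "HOL-Analysis.Analysis"
begin

definition eint :: "ereal \<Rightarrow> ereal \<Rightarrow> real set" where
  "eint S T = {t. S < ereal t \<and> ereal t < T}"

definition is_sol ::
  "real \<Rightarrow> real \<Rightarrow> ereal \<Rightarrow> ereal \<Rightarrow> (real \<Rightarrow> real) \<Rightarrow> (real \<Rightarrow> real) \<Rightarrow> (real \<Rightarrow> real) \<Rightarrow> bool" where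
  "is_sol n lam S T w x y \<longleftrightarrow> S < T \<and> (\<forall>t\<in>eint S T.
      (w has_real_derivative (x t * w t)) (at t) \<and>
      (x has_real_derivative (x t ^ 2 - x t * y t + n - 1 - lam * w t ^ 2)) (at t) \<and>
      (y has_real_derivative (x t * y t - n * x t ^ 2 - lam * w t ^ 2)) (at t))"

definition is_maximal_sol ::
  "real \<Rightarrow> real \<Rightarrow> ereal \<Rightarrow> ereal \<Rightarrow> (real \<Rightarrow> real) \<Rightarrow> (real \<Rightarrow> real) \<Rightarrow> (real \<Rightarrow> real) \<Rightarrow> bool" where
  "is_maximal_sol n lam S T w x y \<longleftrightarrow> is_sol n lam S T w x y \<and>
     (\<forall>S' T' w' x' y'. S' \<le> S \<and> T \<le> T' \<and> is_sol n lam S' T' w' x' y' \<and>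
        (\<forall>t\<in>eint S T. w' t = w t \<and> x' t = x t \<and> y' t = y t) \<longrightarrow> S' = S \<and> T' = T)"

definition to_end :: "ereal \<Rightarrow> real filter" where
  "to_end T = (if T = \<infinity> then at_top else at_left (real_of_ereal T))"

end

theory Submission
  imports Defs "HOL-Real_Asymp.Real_Asymp"
begin

text \<open>If \<open>limsup x < 0\<close>, then eventually \<open>x \<le> c\<close> for some \<open>c < 0\<close>. Since \<open>(ln w)' = x\<close>,
  the positive function \<open>w\<close> then decays at least like \<open>exp (c t)\<close>, so its integral over a
  tail of the interval is finite, contradicting the divergence hypothesis.\<close>

lemma exp_bound_of_rate_le:
  fixes w x :: "real \<Rightarrow> real" and a s c :: real
  assumes "a \<le> s"
    and deriv: "\<And>u. a \<le> u \<Longrightarrow> u \<le> s \<Longrightarrow> (w has_real_derivative x u * w u) (at u)"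
    and nonneg: "\<And>u. a \<le> u \<Longrightarrow> u \<le> s \<Longrightarrow> w u \<ge> 0"
    and rate: "\<And>u. a \<le> u \<Longrightarrow> u \<le> s \<Longrightarrow> x u \<le> c"
  shows "w s \<le> w a * exp (c * (s - a))"
proof -
  have "w s * exp (- c * s) \<le> w a * exp (- c * a)"
  proof (rule DERIV_nonpos_imp_nonincreasing[OF \<open>a \<le> s\<close>])
    fix u assume u: "a \<le> u" "u \<le> s"
    have "((\<lambda>u. w u * exp (- c * u)) has_real_derivative
        (x u - c) * (w u * exp (- c * u))) (at u)"
      by (rule derivative_eq_intros deriv[OF u] | simp add: algebra_simps)+
    moreover have "(x u - c) * (w u * exp (- c * u)) \<le> 0"
      using rate[OF u] nonneg[OF u] by (intro mult_nonpos_nonneg) auto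
    ultimately show "\<exists>y. ((\<lambda>u. w u * exp (- c * u)) has_real_derivative y) (at u) \<and> y \<le> 0"
      by blast
  qed
  then show ?thesis
    by (simp add: field_simps exp_diff right_diff_distrib exp_minus)
qed

lemma nn_integral_exp_decay:
  fixes C e a :: real
  assumes "C \<ge> 0" "e > 0"
  shows "(\<integral>\<^sup>+ s. ennreal (C * exp (- e * (s - a))) * indicator {a..} s \<partial>lborel) = ennreal (C / e)"
proof -
  have "(\<integral>\<^sup>+ s. ennreal (C * exp (- e * (s - a))) * indicator {a..} s \<partial>lborel)
      = ennreal (0 - (- (C / e) * exp (- e * (a - a))))"
  proof (rule nn_integral_FTC_atLeast[where F = "\<lambda>s. - (C / e) * exp (- e * (s - a))"])
    show "(\<lambda>s. C * exp (- e * (s - a))) \<in> borel_measurable borel"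
      by (intro borel_measurable_continuous_onI continuous_intros)
    show "((\<lambda>s. - (C / e) * exp (- e * (s - a))) \<longlongrightarrow> 0) at_top"
      using \<open>e > 0\<close> by real_asymp
    fix s
    show "((\<lambda>s. - (C / e) * exp (- e * (s - a))) has_real_derivative C * exp (- e * (s - a))) (at s)"
      using \<open>e > 0\<close> by (auto intro!: derivative_eq_intros simp: field_simps)
    show "0 \<le> C * exp (- e * (s - a))" using \<open>C \<ge> 0\<close> by simp
  qed
  then show ?thesis by simp
qed

lemma nn_integral_tail_finite_of_rate_neg:
  fixes w x :: "real \<Rightarrow> real" and t1 e :: real and T :: ereal
  assumes "e > 0" and "ereal t1 < T"
    and deriv: "\<And>s. t1 \<le> s \<Longrightarrow> ereal s < T \<Longrightarrow> (w has_real_derivative x s * w s) (at s)"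
    and nonneg: "\<And>s. t1 \<le> s \<Longrightarrow> ereal s < T \<Longrightarrow> w s \<ge> 0"
    and rate: "\<And>s. t1 \<le> s \<Longrightarrow> ereal s < T \<Longrightarrow> x s \<le> - e"
  shows "(\<integral>\<^sup>+ s. ennreal (indicator {s. t1 \<le> s \<and> ereal s < T} s * w s) \<partial>lborel) \<noteq> \<infinity>"
proof -
  have bound: "w s \<le> w t1 * exp (- e * (s - t1))" if s: "t1 \<le> s" "ereal s < T" for s
  proof (rule exp_bound_of_rate_le[OF \<open>t1 \<le> s\<close>])
    fix u assume u: "t1 \<le> u" "u \<le> s"
    then have "ereal u < T" using s by (meson ereal_less_eq(3) le_less_trans)
    with u show "(w has_real_derivative x u * w u) (at u)" "w u \<ge> 0" "x u \<le> - e"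
      by (simp_all add: deriv nonneg rate)
  qed
  have "(\<integral>\<^sup>+ s. ennreal (indicator {s. t1 \<le> s \<and> ereal s < T} s * w s) \<partial>lborel)
      \<le> (\<integral>\<^sup>+ s. ennreal (w t1 * exp (- e * (s - t1))) * indicator {t1..} s \<partial>lborel)"
    using bound by (intro nn_integral_mono) (auto simp: indicator_def intro: ennreal_leI)
  also have "\<dots> = ennreal (w t1 / e)"
    using nonneg[of t1] \<open>ereal t1 < T\<close> \<open>e > 0\<close> by (intro nn_integral_exp_decay) auto
  finally show ?thesis
    by (metis ennreal_neq_top infinity_ennreal_def neq_top_trans)
qed

lemma eventually_to_end_tail:
  fixes S T :: ereal
  assumes "S < T" and "eventually P (to_end T)"
  obtains t1 where "t1 \<in> eint S T" and "\<And>s. t1 \<le> s \<Longrightarrow> ereal s < T \<Longrightarrow> P s"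
proof -
  obtain t0 where t0: "S < ereal t0" "ereal t0 < T"
    using ereal_dense2[OF \<open>S < T\<close>] by blast
  show thesis
  proof (cases T)
    case PInf
    then obtain N where "\<And>s. s \<ge> N \<Longrightarrow> P s"
      using assms(2) by (auto simp: to_end_def eventually_at_top_linorder)
    with t0 PInf show thesis
      by (intro that[of "max N t0"]) (auto simp: eint_def less_le_trans)
  next
    case (real r)
    then obtain b where b: "b < r" "\<And>s. b < s \<Longrightarrow> s < r \<Longrightarrow> P s"
      using assms(2) by (auto simp: to_end_def eventually_at_left_field)
    define t1 where "t1 = (max b t0 + r) / 2"
    have "t0 < r" using t0 real by simp
    then have "max b t0 < t1" "t1 < r" using b by (auto simp: t1_def)
    moreover from this have "S < ereal t1"
      using t0(1) less_trans[of S "ereal t0" "ereal t1"] by simp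
    ultimately show thesis
      using b real
      by (intro that[of t1]) (auto simp: eint_def)
  qed (use t0 in auto)
qed

theorem lemma3p6:
  fixes n :: nat and lam :: real and S T :: ereal and w x y :: "real \<Rightarrow> real"
  assumes "n \<ge> 2" and "lam > 0"
    and "is_maximal_sol (real n) lam S T w x y"
    and "\<forall>t\<in>eint S T. w t > 0"
    and "\<forall>t0\<in>eint S T. (\<integral>\<^sup>+ s. ennreal (indicator {s. t0 \<le> s \<and> ereal s < T} s * w s) \<partial>lborel) = \<infinity>"
  shows "Limsup (to_end T) (\<lambda>t. ereal (x t)) \<ge> 0"
proof (rule ccontr)
  assume "\<not> ?thesis"
  then obtain c where c: "Limsup (to_end T) (\<lambda>t. ereal (x t)) < ereal c" and "c < 0"
    using ereal_dense2[of _ 0] by (auto simp: not_le zero_ereal_def)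
  have "eventually (\<lambda>t. x t \<le> c) (to_end T)"
    using Limsup_lessD[OF c] by (rule eventually_mono) simp
  moreover have sol: "is_sol (real n) lam S T w x y"
    using assms(3) by (simp add: is_maximal_sol_def)
  ultimately obtain t1 where t1: "t1 \<in> eint S T"
    and rate: "\<And>s. t1 \<le> s \<Longrightarrow> ereal s < T \<Longrightarrow> x s \<le> c"
    using eventually_to_end_tail unfolding is_sol_def by blast
  have tail: "s \<in> eint S T" if "t1 \<le> s" "ereal s < T" for s
    using t1 that by (auto simp: eint_def intro: less_le_trans)
  have "(\<integral>\<^sup>+ s. ennreal (indicator {s. t1 \<le> s \<and> ereal s < T} s * w s) \<partial>lborel) \<noteq> \<infinity>"
  proof (rule nn_integral_tail_finite_of_rate_neg[where e = "- c"])
    show "- c > 0" "ereal t1 < T" using \<open>c < 0\<close> t1 by (auto simp: eint_def)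
    fix s assume "t1 \<le> s" "ereal s < T"
    with tail sol assms(4) rate
    show "(w has_real_derivative x s * w s) (at s)" "w s \<ge> 0" "x s \<le> - (- c)"
      by (auto simp: is_sol_def less_imp_le)
  qed
  with assms(5) t1 show False by blast
qed
end
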